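(* Let $R$ be a ring and let $S$ be a non-empty subset of $R$. For an ideal $\mathfrak{b}$ of $R$ write $(S+\mathfrak{b})/\mathfrak{b}$ for the image of $S$ in $R/\mathfrak{b}$. \begin{enumerate} \item If there exists an ideal $\mathfrak{b}$ of $R$ such that $(S+\mathfrak{b})/\mathfrak{b}\subseteq \mathcal{C}_{R/\mathfrak{b}}$, then there is a least ideal $\mathfrak{a}(S)$ of $R$ (with respect to inclusion) with this property. \item If there exists an ideal $\mathfrak{b}$ of $R$ such that $(S+\mathfrak{b})/\mathfrak{b}\subseteq {}'\mathcal{C}_{R/\mathfrak{b}}$, then there is a least ideal ${}'\mathfrak{a}(S)$ of $R$ with this property, and ${}'\mathfrak{a}(S)\subseteq \mathfrak{a}(S)$. \item If there exists an ideal $\mathfrak{b}$ of $R$ such that $(S+\mathfrak{b})/\mathfrak{b}\subseteq \mathcal{C}'_{R/\mathfrak{b}}$, then there is a least ideal $\mathfrak{a}'(S)$ of $R$ with this property, and $\mathfrak{a}'(S)\subseteq \mathfrak{a}(S)$. \end{enumerate}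
   Context: All rings are associative with $1$. For a ring $A$: ${}'\mathcal{C}_A=\{r\in A: xr=0\Rightarrow x=0 \text{ for } x\in A\}$ (left regular elements), $\mathcal{C}'_A=\{r\in A: rx=0\Rightarrow x=0\}$ (right regular elements), and $\mathcal{C}_A={}'\mathcal{C}_A\cap\mathcal{C}'_A$ (regular elements). *)

theory Defs
  imports "HOL-Algebra.QuotRing"
begin

definition left_regular_elems :: "('a, 'b) ring_scheme \<Rightarrow> 'a set" where
  "left_regular_elems A = {r \<in> carrier A. \<forall>x \<in> carrier A. x \<otimes>\<^bsub>A\<^esub> r = \<zero>\<^bsub>A\<^esub> \<longrightarrow> x = \<zero>\<^bsub>A\<^esub>}"

definition right_regular_elems :: "('a, 'b) ring_scheme \<Rightarrow> 'a set" where
  "right_regular_elems A = {r \<in> carrier A. \<forall>x \<in> carrier A. r \<otimes>\<^bsub>A\<^esub> x = \<zero>\<^bsub>A\<^esub> \<longrightarrow> x = \<zero>\<^bsub>A\<^esub>}"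

definition regular_elems :: "('a, 'b) ring_scheme \<Rightarrow> 'a set" where
  "regular_elems A = left_regular_elems A \<inter> right_regular_elems A"

definition quot_image :: "('a, 'b) ring_scheme \<Rightarrow> 'a set \<Rightarrow> 'a set \<Rightarrow> 'a set set" where
  "quot_image R S b = (\<lambda>s. b +>\<^bsub>R\<^esub> s) ` S"

definition least_wrt_incl :: "('a set \<Rightarrow> bool) \<Rightarrow> 'a set \<Rightarrow> bool" where
  "least_wrt_incl P I \<longleftrightarrow> P I \<and> (\<forall>J. P J \<longrightarrow> I \<subseteq> J)"

end

theory Submission
  imports Defs
begin

text \<open>
  For an ideal \<open>I\<close> and \<open>s \<in> R\<close>, the coset \<open>I + s\<close> is left regular in \<open>R/I\<close> iff
  \<open>x s \<in> I\<close> implies \<open>x \<in> I\<close> for all \<open>x \<in> R\<close>, and symmetrically for right regularity.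
  Such closure conditions survive arbitrary intersections of ideals, so the intersection of
  all ideals with the property is the least one. Regularity is the conjunction of the two
  one-sided conditions, so each one-sided least ideal lies below the two-sided one.
\<close>

lemma least_wrt_incl_Inter:
  assumes "P I" and "\<And>F. F \<noteq> {} \<Longrightarrow> (\<And>I. I \<in> F \<Longrightarrow> P I) \<Longrightarrow> P (\<Inter>F)"
  shows "least_wrt_incl P (\<Inter>{I. P I})"
proof -
  have "P (\<Inter>{I. P I})"
    using assms(2)[of "{I. P I}"] assms(1) by blast
  then show ?thesis
    unfolding least_wrt_incl_def by blast
qed

lemma least_wrt_incl_antimono:
  assumes "least_wrt_incl P I" and "least_wrt_incl Q J" and "\<And>K. P K \<Longrightarrow> Q K"
  shows "J \<subseteq> I"
  using assms unfolding least_wrt_incl_def by blast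

lemma (in ideal) rcos_eq_self_iff:
  assumes "x \<in> carrier R"
  shows "I +> x = I \<longleftrightarrow> x \<in> I"
  using rcos_const_imp_mem[OF assms] a_rcos_zero[OF is_ideal] by blast

lemma (in ideal) carrier_FactRing: "carrier (R Quot I) = (\<lambda>x. I +> x) ` carrier R"
  by (auto simp: FactRing_def A_RCOSETS_def')

lemma (in ideal) left_regular_elems_FactRing_iff:
  assumes "s \<in> carrier R"
  shows "I +> s \<in> left_regular_elems (R Quot I) \<longleftrightarrow> (\<forall>x\<in>carrier R. x \<otimes> s \<in> I \<longrightarrow> x \<in> I)"
proof -
  have "I +> s \<in> carrier (R Quot I)" using assms carrier_FactRing by blast
  then have "I +> s \<in> left_regular_elems (R Quot I) \<longleftrightarrow>
      (\<forall>x\<in>carrier R. [mod I:] (I +> x) \<Otimes> (I +> s) = I \<longrightarrow> I +> x = I)"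
    unfolding left_regular_elems_def carrier_FactRing by (simp add: FactRing_def)
  also have "\<dots> \<longleftrightarrow> (\<forall>x\<in>carrier R. x \<otimes> s \<in> I \<longrightarrow> x \<in> I)"
    using assms by (simp add: rcoset_mult_add rcos_eq_self_iff)
  finally show ?thesis .
qed

lemma (in ideal) right_regular_elems_FactRing_iff:
  assumes "s \<in> carrier R"
  shows "I +> s \<in> right_regular_elems (R Quot I) \<longleftrightarrow> (\<forall>x\<in>carrier R. s \<otimes> x \<in> I \<longrightarrow> x \<in> I)"
proof -
  have "I +> s \<in> carrier (R Quot I)" using assms carrier_FactRing by blast
  then have "I +> s \<in> right_regular_elems (R Quot I) \<longleftrightarrow>
      (\<forall>x\<in>carrier R. [mod I:] (I +> s) \<Otimes> (I +> x) = I \<longrightarrow> I +> x = I)"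
    unfolding right_regular_elems_def carrier_FactRing by (simp add: FactRing_def)
  also have "\<dots> \<longleftrightarrow> (\<forall>x\<in>carrier R. s \<otimes> x \<in> I \<longrightarrow> x \<in> I)"
    using assms by (simp add: rcoset_mult_add rcos_eq_self_iff)
  finally show ?thesis .
qed

lemma (in ring) quot_image_left_regular_Inter:
  assumes "S \<subseteq> carrier R" and "F \<noteq> {}"
    and "\<And>I. I \<in> F \<Longrightarrow> ideal I R \<and> quot_image R S I \<subseteq> left_regular_elems (R Quot I)"
  shows "ideal (\<Inter>F) R \<and> quot_image R S (\<Inter>F) \<subseteq> left_regular_elems (R Quot (\<Inter>F))"
proof -
  have ideals: "ideal I R" if "I \<in> F" for I
    using assms(3)[OF that] by blast
  have closed: "x \<in> I" if "I \<in> F" "s \<in> S" "x \<in> carrier R" "x \<otimes> s \<in> I" for I s x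
  proof -
    have "I +> s \<in> left_regular_elems (R Quot I)"
      using assms(3)[OF that(1)] that(2) unfolding quot_image_def by blast
    then show ?thesis
      using ideal.left_regular_elems_FactRing_iff[OF ideals[OF that(1)] subsetD[OF assms(1) that(2)]]
        that(3,4) by blast
  qed
  have Inter: "ideal (\<Inter>F) R"
    using i_Intersect assms(2) ideals by blast
  have "\<Inter>F +> s \<in> left_regular_elems (R Quot (\<Inter>F))" if "s \<in> S" for s
    using ideal.left_regular_elems_FactRing_iff[OF Inter subsetD[OF assms(1) that]] closed that
    by blast
  with Inter show ?thesis
    unfolding quot_image_def by blast
qed

lemma (in ring) quot_image_right_regular_Inter:
  assumes "S \<subseteq> carrier R" and "F \<noteq> {}"
    and "\<And>I. I \<in> F \<Longrightarrow> ideal I R \<and> quot_image R S I \<subseteq> right_regular_elems (R Quot I)"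
  shows "ideal (\<Inter>F) R \<and> quot_image R S (\<Inter>F) \<subseteq> right_regular_elems (R Quot (\<Inter>F))"
proof -
  have ideals: "ideal I R" if "I \<in> F" for I
    using assms(3)[OF that] by blast
  have closed: "x \<in> I" if "I \<in> F" "s \<in> S" "x \<in> carrier R" "s \<otimes> x \<in> I" for I s x
  proof -
    have "I +> s \<in> right_regular_elems (R Quot I)"
      using assms(3)[OF that(1)] that(2) unfolding quot_image_def by blast
    then show ?thesis
      using ideal.right_regular_elems_FactRing_iff[OF ideals[OF that(1)] subsetD[OF assms(1) that(2)]]
        that(3,4) by blast
  qed
  have Inter: "ideal (\<Inter>F) R"
    using i_Intersect assms(2) ideals by blast
  have "\<Inter>F +> s \<in> right_regular_elems (R Quot (\<Inter>F))" if "s \<in> S" for s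
    using ideal.right_regular_elems_FactRing_iff[OF Inter subsetD[OF assms(1) that]] closed that
    by blast
  with Inter show ?thesis
    unfolding quot_image_def by blast
qed

theorem proposition1p1:
  fixes R :: "('a, 'b) ring_scheme" and S :: "'a set"
  assumes "ring R" and "S \<subseteq> carrier R" and "S \<noteq> {}"
  shows
    "((\<exists>b. ideal b R \<and> quot_image R S b \<subseteq> regular_elems (R Quot b)) \<longrightarrow>
       (\<exists>a. least_wrt_incl (\<lambda>b. ideal b R \<and> quot_image R S b \<subseteq> regular_elems (R Quot b)) a)) \<and>
    ((\<exists>b. ideal b R \<and> quot_image R S b \<subseteq> left_regular_elems (R Quot b)) \<longrightarrow>
       (\<exists>la. least_wrt_incl (\<lambda>b. ideal b R \<and> quot_image R S b \<subseteq> left_regular_elems (R Quot b)) la \<and>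
          (\<forall>a. least_wrt_incl (\<lambda>b. ideal b R \<and> quot_image R S b \<subseteq> regular_elems (R Quot b)) a
               \<longrightarrow> la \<subseteq> a))) \<and>
    ((\<exists>b. ideal b R \<and> quot_image R S b \<subseteq> right_regular_elems (R Quot b)) \<longrightarrow>
       (\<exists>ra. least_wrt_incl (\<lambda>b. ideal b R \<and> quot_image R S b \<subseteq> right_regular_elems (R Quot b)) ra \<and>
          (\<forall>a. least_wrt_incl (\<lambda>b. ideal b R \<and> quot_image R S b \<subseteq> regular_elems (R Quot b)) a
               \<longrightarrow> ra \<subseteq> a)))"
proof -
  interpret ring R by fact
  let ?P = "\<lambda>I. ideal I R \<and> quot_image R S I \<subseteq> regular_elems (R Quot I)"
  let ?L = "\<lambda>I. ideal I R \<and> quot_image R S I \<subseteq> left_regular_elems (R Quot I)"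
  let ?Q = "\<lambda>I. ideal I R \<and> quot_image R S I \<subseteq> right_regular_elems (R Quot I)"
  have P_iff: "?P I \<longleftrightarrow> ?L I \<and> ?Q I" for I
    unfolding regular_elems_def by blast
  have P_Inter: "?P (\<Inter>F)" if "F \<noteq> {}" "\<And>I. I \<in> F \<Longrightarrow> ?P I" for F
    using quot_image_left_regular_Inter[OF assms(2) that(1)]
      quot_image_right_regular_Inter[OF assms(2) that(1)] that(2) P_iff by blast
  have least_P: "least_wrt_incl ?P (\<Inter>{I. ?P I})" if "?P I" for I
    using least_wrt_incl_Inter[of ?P, OF that P_Inter] .
  have least_L: "least_wrt_incl ?L (\<Inter>{I. ?L I})" if "?L I" for I
    using least_wrt_incl_Inter[of ?L, OF that quot_image_left_regular_Inter[OF assms(2)]] .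
  have least_Q: "least_wrt_incl ?Q (\<Inter>{I. ?Q I})" if "?Q I" for I
    using least_wrt_incl_Inter[of ?Q, OF that quot_image_right_regular_Inter[OF assms(2)]] .
  have L_below: "\<Inter>{I. ?L I} \<subseteq> a" if "least_wrt_incl ?P a" "?L I" for a I
    using least_wrt_incl_antimono[OF that(1) least_L[OF that(2)]] P_iff by blast
  have Q_below: "\<Inter>{I. ?Q I} \<subseteq> a" if "least_wrt_incl ?P a" "?Q I" for a I
    using least_wrt_incl_antimono[OF that(1) least_Q[OF that(2)]] P_iff by blast
  show ?thesis
  proof (intro conjI impI; elim exE)
    show "\<exists>a. least_wrt_incl ?P a" if "?P I" for I
      using least_P[OF that] ..
    show "\<exists>la. least_wrt_incl ?L la \<and> (\<forall>a. least_wrt_incl ?P a \<longrightarrow> la \<subseteq> a)" if "?L I" for I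
      using least_L[OF that] L_below[OF _ that] by blast
    show "\<exists>ra. least_wrt_incl ?Q ra \<and> (\<forall>a. least_wrt_incl ?P a \<longrightarrow> ra \<subseteq> a)" if "?Q I" for I
      using least_Q[OF that] Q_below[OF _ that] by blast
  qed
qed

end
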